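(* If $a \geq 2$, then $I_{a,a} \geq \dfrac{r(r+1)}{2}$, where $r = P_a(2a-1)$.
   Context: $K_{a,a}$ is the complete bipartite graph with both partite sets of size $a$. $I_{a,a}$ denotes the number of isomorphism classes (as unlabeled graphs) of spanning trees of $K_{a,a}$. $P_k(m)$ denotes the number of integer partitions of $m$ into exactly $k$ positive parts. *)

theory Defs
  imports Complex_Main "HOL-Library.Multiset"
begin

definition adj :: "'v set set \<Rightarrow> 'v \<Rightarrow> 'v \<Rightarrow> bool" where
  "adj E u v \<longleftrightarrow> {u, v} \<in> E"

definition simple_graph :: "'v set \<Rightarrow> 'v set set \<Rightarrow> bool" where
  "simple_graph V E \<longleftrightarrow> (\<forall>e\<in>E. \<exists>u v. e = {u, v} \<and> u \<noteq> v \<and> u \<in> V \<and> v \<in> V)"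

definition connected_graph :: "'v set \<Rightarrow> 'v set set \<Rightarrow> bool" where
  "connected_graph V E \<longleftrightarrow> (\<forall>u\<in>V. \<forall>v\<in>V. (adj E)\<^sup>*\<^sup>* u v)"

definition is_cycle :: "'v set set \<Rightarrow> 'v list \<Rightarrow> bool" where
  "is_cycle E vs \<longleftrightarrow> length vs \<ge> 3 \<and> distinct vs \<and>
     (\<forall>i < length vs. {vs ! i, vs ! ((i + 1) mod length vs)} \<in> E)"

definition acyclic_graph :: "'v set set \<Rightarrow> bool" where
  "acyclic_graph E \<longleftrightarrow> \<not> (\<exists>vs. is_cycle E vs)"

definition is_tree :: "'v set \<Rightarrow> 'v set set \<Rightarrow> bool" where
  "is_tree V E \<longleftrightarrow> simple_graph V E \<and> connected_graph V E \<and> acyclic_graph E"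

definition Kaa_verts :: "nat \<Rightarrow> (nat + nat) set" where
  "Kaa_verts a = Inl ` {..<a} \<union> Inr ` {..<a}"

definition Kaa_edges :: "nat \<Rightarrow> (nat + nat) set set" where
  "Kaa_edges a = {{Inl i, Inr j} | i j. i < a \<and> j < a}"

definition spanning_tree_Kaa :: "nat \<Rightarrow> (nat + nat) set set \<Rightarrow> bool" where
  "spanning_tree_Kaa a T \<longleftrightarrow> T \<subseteq> Kaa_edges a \<and> is_tree (Kaa_verts a) T"

definition graph_iso :: "'v set \<Rightarrow> 'v set set \<Rightarrow> 'v set set \<Rightarrow> bool" where
  "graph_iso V E1 E2 \<longleftrightarrow> (\<exists>f. bij_betw f V V \<and>
      (\<forall>u\<in>V. \<forall>v\<in>V. {u, v} \<in> E1 \<longleftrightarrow> {f u, f v} \<in> E2))"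

definition I_aa :: "nat \<Rightarrow> nat" where
  "I_aa a = card ({T. spanning_tree_Kaa a T} //
      {(T1, T2). spanning_tree_Kaa a T1 \<and> spanning_tree_Kaa a T2 \<and>
                 graph_iso (Kaa_verts a) T1 T2})"

definition P_part :: "nat \<Rightarrow> nat \<Rightarrow> nat" where
  "P_part k m = card {p :: nat multiset. size p = k \<and> sum_mset p = m \<and> (\<forall>x\<in>#p. x > 0)}"

end

(*
  Any two partitions P, Q of 2a - 1 into a positive parts occur as the degree multisets of
  the two sides of a spanning tree of K_{a,a}: a bipartite degree sequence in which each side
  sums to |V| - 1 is realised by a tree, obtained by removing a leaf, realising the smaller
  sequence and attaching the leaf again. Conversely, an isomorphism between two connected
  bipartite graphs either preserves or swaps the sides, so the unordered pair {P, Q} of side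
  degree multisets is an isomorphism invariant. Hence there are at least as many isomorphism
  classes of spanning trees as unordered pairs of such partitions, namely r (r + 1) / 2.
*)
theory Submission
  imports Defs
begin

section \<open>Growing trees by leaves\<close>

definition degree :: "'v set set \<Rightarrow> 'v \<Rightarrow> nat" where
  "degree E x = card {y. {x, y} \<in> E}"

definition bipartite_edges :: "'v set \<Rightarrow> 'v set \<Rightarrow> 'v set set" where
  "bipartite_edges L R = {{x, y} | x y. x \<in> L \<and> y \<in> R}"

lemma bipartite_edges_commute: "bipartite_edges L R = bipartite_edges R L"
  unfolding bipartite_edges_def by (auto simp: insert_commute)

lemma bipartite_edge_sides:
  assumes "{x, y} \<in> bipartite_edges L R" "L \<inter> R = {}"
  shows "x \<in> L \<union> R" "y \<in> L \<union> R" "x \<in> L \<longleftrightarrow> y \<in> R"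
  using assms unfolding bipartite_edges_def by (auto simp: doubleton_eq_iff)

lemma simple_graph_bipartite:
  assumes "E \<subseteq> bipartite_edges L R" "L \<inter> R = {}"
  shows "simple_graph (L \<union> R) E"
  unfolding simple_graph_def
proof
  fix e assume "e \<in> E"
  then obtain x y where "e = {x, y}" "x \<in> L" "y \<in> R"
    using assms(1) unfolding bipartite_edges_def by blast
  then show "\<exists>u v. e = {u, v} \<and> u \<noteq> v \<and> u \<in> L \<union> R \<and> v \<in> L \<union> R"
    using assms(2) by blast
qed

lemma simple_graph_edge_vertices:
  "simple_graph V E \<Longrightarrow> {x, y} \<in> E \<Longrightarrow> x \<in> V \<and> y \<in> V"
  unfolding simple_graph_def by (fastforce simp: doubleton_eq_iff)

lemma is_tree_singleton: "is_tree {x} {}"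
  unfolding is_tree_def simple_graph_def connected_graph_def acyclic_graph_def is_cycle_def
  by (auto intro!: exI[of _ 0])

lemma is_cycle_two_neighbours:
  assumes "is_cycle E vs" "v \<in> set vs"
  obtains y z where "y \<noteq> z" "{v, y} \<in> E" "{v, z} \<in> E"
proof -
  let ?n = "length vs"
  have n: "?n \<ge> 3" and dist: "distinct vs"
    and edge: "\<And>i. i < ?n \<Longrightarrow> {vs ! i, vs ! ((i + 1) mod ?n)} \<in> E"
    using assms(1) unfolding is_cycle_def by auto
  obtain k where k: "k < ?n" "vs ! k = v" using assms(2) by (auto simp: in_set_conv_nth)
  define k' where "k' = (if k = 0 then ?n - 1 else k - 1)"
  have k': "k' < ?n" "(k' + 1) mod ?n = k" using k n by (auto simp: k'_def)
  have "k' \<noteq> (k + 1) mod ?n"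
  proof (cases "k + 1 < ?n")
    case False
    then have "k + 1 = ?n" using k by simp
    then show ?thesis using n by (auto simp: k'_def)
  qed (use n in \<open>auto simp: k'_def\<close>)
  moreover have "(k + 1) mod ?n < ?n" using n by (auto intro: mod_less_divisor)
  ultimately have "vs ! k' \<noteq> vs ! ((k + 1) mod ?n)"
    using dist k' by (simp add: nth_eq_iff_index_eq)
  moreover have "{v, vs ! k'} \<in> E" using edge[OF k'(1)] k k' by (simp add: insert_commute)
  moreover have "{v, vs ! ((k + 1) mod ?n)} \<in> E" using edge[OF k(1)] k by simp
  ultimately show ?thesis by (rule that)
qed

lemma connected_graph_add_leaf:
  assumes conn: "connected_graph V E" and w: "w \<in> V"
  shows "connected_graph (insert v V) (insert {v, w} E)"
proof -
  let ?E = "insert {v, w} E"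
  have "adj E \<le> adj ?E" by (auto simp: adj_def)
  then have mono: "(adj ?E)\<^sup>*\<^sup>* x y" if "(adj E)\<^sup>*\<^sup>* x y" for x y
    using rtranclp_mono that by (metis predicate2D)
  have vw: "adj ?E v w" "adj ?E w v" by (auto simp: adj_def insert_commute)
  have to_w: "(adj ?E)\<^sup>*\<^sup>* x w" and from_w: "(adj ?E)\<^sup>*\<^sup>* w x" if "x \<in> insert v V" for x
    using that vw conn w mono unfolding connected_graph_def by auto
  show ?thesis
    unfolding connected_graph_def using to_w from_w by (meson rtranclp_trans)
qed

lemma acyclic_graph_add_leaf:
  assumes acyc: "acyclic_graph E" and fresh: "\<And>y. {v, y} \<notin> E"
  shows "acyclic_graph (insert {v, w} E)"
  unfolding acyclic_graph_def
proof
  assume "\<exists>vs. is_cycle (insert {v, w} E) vs"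
  then obtain vs where cyc: "is_cycle (insert {v, w} E) vs" by blast
  show False
  proof (cases "v \<in> set vs")
    case True
    have only_w: "y = w" if "{v, y} \<in> insert {v, w} E" for y
      using that fresh by (auto simp: doubleton_eq_iff)
    from is_cycle_two_neighbours[OF cyc True] show False by (metis only_w)
  next
    case False
    let ?n = "length vs"
    have "{vs ! i, vs ! ((i + 1) mod ?n)} \<in> E" if "i < ?n" for i
    proof -
      have "(i + 1) mod ?n < ?n" using that by (auto intro: mod_less_divisor)
      then have "vs ! i \<noteq> v" "vs ! ((i + 1) mod ?n) \<noteq> v" using False that by auto
      moreover have "{vs ! i, vs ! ((i + 1) mod ?n)} \<in> insert {v, w} E"
        using cyc that unfolding is_cycle_def by blast
      ultimately show ?thesis by (auto simp: doubleton_eq_iff)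
    qed
    then have "is_cycle E vs" using cyc unfolding is_cycle_def by blast
    then show False using acyc unfolding acyclic_graph_def by blast
  qed
qed

lemma is_tree_add_leaf:
  assumes tree: "is_tree V E" and v: "v \<notin> V" and w: "w \<in> V"
  shows "is_tree (insert v V) (insert {v, w} E)"
proof -
  have simple: "simple_graph V E" using tree by (simp add: is_tree_def)
  then have "simple_graph (insert v V) (insert {v, w} E)"
    using v w unfolding simple_graph_def by blast
  moreover have "\<And>y. {v, y} \<notin> E" using simple_graph_edge_vertices[OF simple] v by blast
  ultimately show ?thesis
    using tree w connected_graph_add_leaf[of V E w v] acyclic_graph_add_leaf[of E v w]
    by (auto simp: is_tree_def)
qed

lemma degree_add_leaf:
  assumes simple: "simple_graph V E" and fin: "finite V" and v: "v \<notin> V" and w: "w \<in> V"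
  shows "degree (insert {v, w} E) v = 1"
    and "degree (insert {v, w} E) w = Suc (degree E w)"
    and "x \<noteq> v \<Longrightarrow> x \<noteq> w \<Longrightarrow> degree (insert {v, w} E) x = degree E x"
proof -
  have nbrs_w: "{y. {w, y} \<in> E} \<subseteq> V" using simple_graph_edge_vertices[OF simple] by blast
  have "{y. {v, y} \<in> insert {v, w} E} = {w}"
    using simple_graph_edge_vertices[OF simple] v by (auto simp: doubleton_eq_iff)
  then show "degree (insert {v, w} E) v = 1" by (simp add: degree_def)
  have "{y. {w, y} \<in> insert {v, w} E} = insert v {y. {w, y} \<in> E}"
    using v w by (auto simp: doubleton_eq_iff)
  moreover have "v \<notin> {y. {w, y} \<in> E}" using nbrs_w v by blast
  moreover have "finite {y. {w, y} \<in> E}" using nbrs_w fin finite_subset by blast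
  ultimately show "degree (insert {v, w} E) w = Suc (degree E w)" by (simp add: degree_def)
  assume "x \<noteq> v" "x \<noteq> w"
  then have "{y. {x, y} \<in> insert {v, w} E} = {y. {x, y} \<in> E}" by (auto simp: doubleton_eq_iff)
  then show "degree (insert {v, w} E) x = degree E x" by (simp add: degree_def)
qed

section \<open>Degree sequences of bipartite trees\<close>

definition bipartite_tree_degrees :: "'v set \<Rightarrow> 'v set \<Rightarrow> ('v \<Rightarrow> nat) \<Rightarrow> bool" where
  "bipartite_tree_degrees L R d \<longleftrightarrow> finite L \<and> finite R \<and> L \<noteq> {} \<and> R \<noteq> {} \<and> L \<inter> R = {} \<and>
     (\<forall>x\<in>L \<union> R. 0 < d x) \<and> sum d L + 1 = card L + card R \<and> sum d R + 1 = card L + card R"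

definition bipartite_tree_with_degrees ::
    "'v set \<Rightarrow> 'v set \<Rightarrow> ('v \<Rightarrow> nat) \<Rightarrow> 'v set set \<Rightarrow> bool" where
  "bipartite_tree_with_degrees L R d T \<longleftrightarrow>
     T \<subseteq> bipartite_edges L R \<and> is_tree (L \<union> R) T \<and> (\<forall>x\<in>L \<union> R. degree T x = d x)"

lemma bipartite_tree_degrees_commute:
  "bipartite_tree_degrees L R d \<longleftrightarrow> bipartite_tree_degrees R L d"
  unfolding bipartite_tree_degrees_def by auto

lemma bipartite_tree_with_degrees_commute:
  "bipartite_tree_with_degrees L R d T \<longleftrightarrow> bipartite_tree_with_degrees R L d T"
  unfolding bipartite_tree_with_degrees_def by (simp add: bipartite_edges_commute Un_commute)

lemma bipartite_tree_degrees_cases: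
  assumes "bipartite_tree_degrees L R d"
  obtains "card L = 1" "card R = 1"
    | v where "v \<in> L" "d v = 1" "2 \<le> card L"
    | v where "v \<in> R" "d v = 1" "2 \<le> card R"
proof -
  have fin: "finite L" "finite R" and ne: "L \<noteq> {}" "R \<noteq> {}" and disj: "L \<inter> R = {}"
    and pos: "\<forall>x\<in>L \<union> R. 0 < d x"
    and sums: "sum d L + 1 = card L + card R" "sum d R + 1 = card L + card R"
    using assms by (auto simp: bipartite_tree_degrees_def)
  have cards: "1 \<le> card L" "1 \<le> card R" using fin ne by (auto simp: Suc_le_eq card_gt_0_iff)
  have singleton_sum: "sum d S = 1" if "card S = 1" "v \<in> S" "d v = 1" for S v
    using that by (auto simp: card_Suc_eq)
  show ?thesis
  proof (cases "card L + card R = 2")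
    case True
    then show ?thesis using cards that(1) by simp
  next
    case False
    have "\<exists>v\<in>L \<union> R. d v = 1"
    proof (rule ccontr)
      assume "\<not> ?thesis"
      then have "\<forall>x\<in>L \<union> R. 2 \<le> d x" using pos by (metis Suc_1 Suc_leI le_neq_implies_less One_nat_def)
      then have "card (L \<union> R) * 2 \<le> sum d (L \<union> R)" using sum_bounded_below[of "L \<union> R" 2 d] by simp
      moreover have "sum d (L \<union> R) = sum d L + sum d R" using fin disj by (rule sum.union_disjoint)
      moreover have "card (L \<union> R) = card L + card R" using fin disj by (simp add: card_Un_disjoint)
      ultimately show False using sums by linarith
    qed
    then obtain v where v: "v \<in> L \<union> R" "d v = 1" by blast
    then consider "v \<in> L" | "v \<in> R" by blast
    then show ?thesis
    proof cases
      case 1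
      then have "card L \<noteq> 1" using singleton_sum[of L v] v sums False by auto
      then show ?thesis using 1 v cards that(2) by simp
    next
      case 2
      then have "card R \<noteq> 1" using singleton_sum[of R v] v sums False by auto
      then show ?thesis using 2 v cards that(3) by simp
    qed
  qed
qed

lemma bipartite_tree_degrees_remove_leaf:
  assumes deg: "bipartite_tree_degrees L R d" and v: "v \<in> L" "d v = 1" and two: "2 \<le> card L"
  obtains w where "w \<in> R" "2 \<le> d w" "bipartite_tree_degrees (L - {v}) R (d(w := d w - 1))"
proof -
  have fin: "finite L" "finite R" and ne: "R \<noteq> {}" and disj: "L \<inter> R = {}"
    and pos: "\<forall>x\<in>L \<union> R. 0 < d x"
    and sums: "sum d L + 1 = card L + card R" "sum d R + 1 = card L + card R"
    using deg by (auto simp: bipartite_tree_degrees_def)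
  have "\<exists>w\<in>R. 2 \<le> d w"
  proof (rule ccontr)
    assume "\<not> ?thesis"
    then have "sum d R \<le> card R" using sum_bounded_above[of R d 1] by fastforce
    then show False using sums two by linarith
  qed
  then obtain w where w: "w \<in> R" "2 \<le> d w" by blast
  let ?d = "d(w := d w - 1)"
  have "w \<notin> L" using w disj by blast
  then have "sum ?d (L - {v}) = sum d (L - {v})" by (intro sum.cong) auto
  moreover have "sum d L = d v + sum d (L - {v})" using fin v by (simp add: sum.remove)
  moreover have "card L = Suc (card (L - {v}))" using fin(1) v(1) by (rule card_Suc_Diff1[symmetric])
  ultimately have sum_L: "sum ?d (L - {v}) + 1 = card (L - {v}) + card R" using sums v by simp
  have "sum ?d (R - {w}) = sum d (R - {w})" by (intro sum.cong) auto
  moreover have "sum d R = d w + sum d (R - {w})" "sum ?d R = ?d w + sum ?d (R - {w})"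
    using fin w by (simp_all add: sum.remove)
  moreover note \<open>card L = Suc (card (L - {v}))\<close>
  ultimately have sum_R: "sum ?d R + 1 = card (L - {v}) + card R" using sums w by simp
  have "card (L - {v}) \<noteq> 0" using two \<open>card L = Suc (card (L - {v}))\<close> by linarith
  then have "L - {v} \<noteq> {}" by (metis card.empty)
  moreover have "\<forall>x\<in>(L - {v}) \<union> R. 0 < ?d x" using pos w by force
  moreover have "(L - {v}) \<inter> R = {}" using disj by blast
  ultimately have "bipartite_tree_degrees (L - {v}) R ?d"
    using fin ne sum_L sum_R unfolding bipartite_tree_degrees_def by blast
  then show ?thesis using w that by blast
qed

lemma bipartite_tree_with_degrees_add_leaf:
  assumes tree: "bipartite_tree_with_degrees (L - {v}) R (d(w := d w - 1)) T"
    and v: "v \<in> L" "d v = 1" and w: "w \<in> R" "0 < d w"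
    and fin: "finite L" "finite R" and disj: "L \<inter> R = {}"
  shows "bipartite_tree_with_degrees L R d (insert {v, w} T)"
proof -
  let ?V = "(L - {v}) \<union> R"
  have T: "T \<subseteq> bipartite_edges (L - {v}) R" "is_tree ?V T"
    and deg_T: "\<forall>x\<in>?V. degree T x = (d(w := d w - 1)) x"
    using tree by (auto simp: bipartite_tree_with_degrees_def)
  have v_new: "v \<notin> ?V" and w_old: "w \<in> ?V" using v w disj by auto
  have V: "insert v ?V = L \<union> R" using v by auto
  have simple: "simple_graph ?V T" using T(2) by (simp add: is_tree_def)
  note deg_new = degree_add_leaf[OF simple _ v_new w_old]
  have "insert {v, w} T \<subseteq> bipartite_edges L R"
    using T(1) v w unfolding bipartite_edges_def by blast
  moreover have "is_tree (L \<union> R) (insert {v, w} T)"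
    using is_tree_add_leaf[OF T(2) v_new w_old] V by simp
  moreover have "degree (insert {v, w} T) x = d x" if "x \<in> L \<union> R" for x
    using that deg_new deg_T fin v w by (cases "x = v"; cases "x = w") auto
  ultimately show ?thesis by (simp add: bipartite_tree_with_degrees_def)
qed

lemma bipartite_tree_with_degrees_single_edge:
  assumes deg: "bipartite_tree_degrees L R d" and cards: "card L = 1" "card R = 1"
  obtains T where "bipartite_tree_with_degrees L R d T"
proof -
  obtain x y where L: "L = {x}" and R: "R = {y}" using cards by (auto simp: card_Suc_eq)
  have xy: "x \<noteq> y" and d: "d x = 1" "d y = 1"
    using deg unfolding bipartite_tree_degrees_def L R by auto
  have simple: "simple_graph {y} {}" by (simp add: simple_graph_def)
  have "is_tree {x, y} {{x, y}}"
    using is_tree_add_leaf[OF is_tree_singleton, of x y] xy by simp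
  moreover have "degree {{x, y}} x = 1" "degree {{x, y}} y = 1"
    using degree_add_leaf[OF simple _ _ singletonI, of x] xy by (auto simp: degree_def)
  ultimately have "bipartite_tree_with_degrees L R d {{x, y}}"
    using d unfolding bipartite_tree_with_degrees_def bipartite_edges_def L R
    by (auto simp: insert_commute)
  then show ?thesis by (rule that)
qed

lemma bipartite_tree_degrees_realizable:
  assumes "bipartite_tree_degrees L R d"
  shows "\<exists>T. bipartite_tree_with_degrees L R d T"
  using assms
proof (induction "card L + card R" arbitrary: L R d rule: less_induct)
  case less
  have prune_leaf: "\<exists>T. bipartite_tree_with_degrees L' R' d T"
    if deg: "bipartite_tree_degrees L' R' d" and size: "card L' + card R' = card L + card R"
      and v: "v \<in> L'" "d v = 1" "2 \<le> card L'" for L' R' v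
  proof -
    obtain w where w: "w \<in> R'" "2 \<le> d w"
      and deg': "bipartite_tree_degrees (L' - {v}) R' (d(w := d w - 1))"
      using bipartite_tree_degrees_remove_leaf[OF deg v] by blast
    have fin: "finite L'" "finite R'" and disj: "L' \<inter> R' = {}"
      using deg by (auto simp: bipartite_tree_degrees_def)
    have "card (L' - {v}) + card R' < card L + card R" using size fin v by (simp add: card_Diff1_less)
    then obtain T where "bipartite_tree_with_degrees (L' - {v}) R' (d(w := d w - 1)) T"
      using less.hyps deg' by blast
    then show ?thesis using bipartite_tree_with_degrees_add_leaf v w fin disj by fastforce
  qed
  from less.prems show ?case
  proof (cases rule: bipartite_tree_degrees_cases)
    case 1
    then show ?thesis using bipartite_tree_with_degrees_single_edge less.prems by metis
  next
    case (2 v)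
    then show ?thesis using prune_leaf[OF less.prems refl] by blast
  next
    case (3 v)
    then show ?thesis
      using prune_leaf[of R L v] less.prems
      by (simp add: bipartite_tree_degrees_commute bipartite_tree_with_degrees_commute add.commute)
  qed
qed

section \<open>Side degrees are an isomorphism invariant\<close>

definition degree_mset :: "'v set set \<Rightarrow> 'v set \<Rightarrow> nat multiset" where
  "degree_mset E S = image_mset (degree E) (mset_set S)"

definition side_degrees :: "'v set \<Rightarrow> 'v set \<Rightarrow> 'v set set \<Rightarrow> nat multiset multiset" where
  "side_degrees L R E = {#degree_mset E L, degree_mset E R#}"

lemma degree_iso:
  assumes f: "bij_betw f V V" and iso: "\<forall>u\<in>V. \<forall>v\<in>V. {u, v} \<in> E1 \<longleftrightarrow> {f u, f v} \<in> E2"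
    and simple: "simple_graph V E1" "simple_graph V E2" and u: "u \<in> V"
  shows "degree E2 (f u) = degree E1 u"
proof -
  have "{y. {f u, y} \<in> E2} = f ` {y. {u, y} \<in> E1}"
  proof
    show "f ` {y. {u, y} \<in> E1} \<subseteq> {y. {f u, y} \<in> E2}"
      using iso u simple_graph_edge_vertices[OF simple(1)] by blast
    show "{y. {f u, y} \<in> E2} \<subseteq> f ` {y. {u, y} \<in> E1}"
    proof
      fix y assume y: "y \<in> {y. {f u, y} \<in> E2}"
      then have "y \<in> V" using simple_graph_edge_vertices[OF simple(2)] by blast
      then obtain y' where "y' \<in> V" "y = f y'" using f by (metis bij_betw_def imageE)
      then show "y \<in> f ` {y. {u, y} \<in> E1}" using iso u y by auto
    qed
  qed
  moreover have "inj_on f {y. {u, y} \<in> E1}"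
    using f simple_graph_edge_vertices[OF simple(1)] unfolding bij_betw_def
    by (meson inj_on_subset subsetI mem_Collect_eq)
  ultimately show ?thesis by (simp add: degree_def card_image)
qed

lemma degree_mset_image:
  assumes "inj_on h A" "\<And>x. x \<in> A \<Longrightarrow> degree E (h x) = f x"
  shows "degree_mset E (h ` A) = image_mset f (mset_set A)"
proof -
  have "degree_mset E (h ` A) = image_mset (degree E \<circ> h) (mset_set A)"
    using assms(1) by (simp add: degree_mset_def image_mset_mset_set[symmetric] multiset.map_comp)
  also have "\<dots> = image_mset f (mset_set A)"
    using assms(2) by (intro image_mset_cong) (cases "finite A"; simp)
  finally show ?thesis .
qed

lemma degree_mset_iso:
  assumes f: "bij_betw f V V" and iso: "\<forall>u\<in>V. \<forall>v\<in>V. {u, v} \<in> E1 \<longleftrightarrow> {f u, f v} \<in> E2"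
    and simple: "simple_graph V E1" "simple_graph V E2" and S: "S \<subseteq> V"
  shows "degree_mset E2 (f ` S) = degree_mset E1 S"
  unfolding degree_mset_def[of E1]
  using degree_iso[OF f iso simple] S f
  by (intro degree_mset_image) (auto simp: bij_betw_def intro: inj_on_subset)

lemma image_eq_of_partition:
  assumes "f ` L \<union> f ` R = C \<union> D" "f ` L \<subseteq> C" "f ` R \<subseteq> D" "C \<inter> D = {}"
  shows "f ` L = C"
proof
  show "C \<subseteq> f ` L"
  proof
    fix x assume x: "x \<in> C"
    then have "x \<in> f ` L \<union> f ` R" unfolding assms(1) by (rule UnI1)
    moreover have "x \<notin> f ` R" using x assms(3,4) by blast
    ultimately show "x \<in> f ` L" by blast
  qed
qed (fact assms(2))

lemma iso_bipartite_preserves_or_swaps_sides: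
  assumes f: "bij_betw f (L \<union> R) (L \<union> R)" and disj: "L \<inter> R = {}"
    and iso: "\<forall>u\<in>L \<union> R. \<forall>v\<in>L \<union> R. {u, v} \<in> E1 \<longleftrightarrow> {f u, f v} \<in> E2"
    and conn: "connected_graph (L \<union> R) E1"
    and bip: "E1 \<subseteq> bipartite_edges L R" "E2 \<subseteq> bipartite_edges L R"
  shows "f ` L = L \<and> f ` R = R \<or> f ` L = R \<and> f ` R = L"
proof -
  let ?V = "L \<union> R"
  let ?keeps_side = "\<lambda>u. f u \<in> L \<longleftrightarrow> u \<in> L"
  have same: "?keeps_side u \<longleftrightarrow> ?keeps_side v" if "u \<in> ?V" "v \<in> ?V" for u v
  proof -
    have "(adj E1)\<^sup>*\<^sup>* u v" using conn that unfolding connected_graph_def by blast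
    then show ?thesis
    proof (induction rule: rtranclp_induct)
      case (step y z)
      then have yz: "{y, z} \<in> E1" by (simp add: adj_def)
      note sides1 = bipartite_edge_sides[OF subsetD[OF bip(1) yz] disj]
      then have "{f y, f z} \<in> E2" using iso yz by blast
      note sides2 = bipartite_edge_sides[OF subsetD[OF bip(2) this] disj]
      have "z \<in> L \<longleftrightarrow> y \<notin> L" "f z \<in> L \<longleftrightarrow> f y \<notin> L"
        using sides1 sides2 disj by auto
      then show ?case using step.IH by simp
    qed simp
  qed
  have fV: "f ` L \<union> f ` R = L \<union> R" using f unfolding bij_betw_def by (simp only: image_Un)
  have side: "f u \<in> R \<longleftrightarrow> f u \<notin> L" "u \<in> R \<longleftrightarrow> u \<notin> L" if "u \<in> ?V" for u
    using bij_betwE[OF f] that disj by blast+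
  show ?thesis
  proof (cases "\<forall>u\<in>?V. ?keeps_side u")
    case True
    then have "f ` L \<subseteq> L" "f ` R \<subseteq> R" using side by (auto intro!: image_subsetI)
    then show ?thesis using image_eq_of_partition fV disj Un_commute Int_commute by metis
  next
    case False
    then have "\<forall>u\<in>?V. \<not> ?keeps_side u" using same by blast
    then have "f ` L \<subseteq> R" "f ` R \<subseteq> L" using side by (auto intro!: image_subsetI)
    then show ?thesis using image_eq_of_partition fV disj Un_commute Int_commute by metis
  qed
qed

lemma side_degrees_iso:
  assumes iso: "graph_iso (L \<union> R) E1 E2" and disj: "L \<inter> R = {}"
    and conn: "connected_graph (L \<union> R) E1"
    and bip: "E1 \<subseteq> bipartite_edges L R" "E2 \<subseteq> bipartite_edges L R"
  shows "side_degrees L R E1 = side_degrees L R E2"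
proof -
  obtain f where f: "bij_betw f (L \<union> R) (L \<union> R)"
    and f_iso: "\<forall>u\<in>L \<union> R. \<forall>v\<in>L \<union> R. {u, v} \<in> E1 \<longleftrightarrow> {f u, f v} \<in> E2"
    using iso unfolding graph_iso_def by blast
  have simple: "simple_graph (L \<union> R) E1" "simple_graph (L \<union> R) E2"
    using simple_graph_bipartite bip disj by blast+
  note deg = degree_mset_iso[OF f f_iso simple]
  from iso_bipartite_preserves_or_swaps_sides[OF f disj f_iso conn bip] show ?thesis
  proof
    assume "f ` L = L \<and> f ` R = R"
    then show ?thesis using deg[of L] deg[of R] by (simp add: side_degrees_def)
  next
    assume "f ` L = R \<and> f ` R = L"
    then show ?thesis using deg[of L] deg[of R] by (simp add: side_degrees_def add_mset_commute)
  qed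
qed

lemma card_image_le_card_quotient:
  assumes fin: "finite A" and refl: "\<And>x. x \<in> A \<Longrightarrow> (x, x) \<in> r"
    and inv: "\<And>x y. (x, y) \<in> r \<Longrightarrow> g x = g y"
  shows "card (g ` A) \<le> card (A // r)"
proof -
  define h where "h C = g (SOME y. y \<in> C)" for C
  have "g ` A \<subseteq> h ` (A // r)"
  proof
    fix z assume "z \<in> g ` A"
    then obtain x where x: "x \<in> A" "z = g x" by blast
    have "x \<in> r `` {x}" using refl x by auto
    then have "(SOME y. y \<in> r `` {x}) \<in> r `` {x}" by (rule someI)
    then have "h (r `` {x}) = g x" using inv by (auto simp: h_def)
    moreover have "r `` {x} \<in> A // r" using x by (auto simp: quotient_def)
    ultimately show "z \<in> h ` (A // r)" using x by force
  qed
  moreover have "finite (A // r)" using fin by (simp add: quotient_def)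
  ultimately show ?thesis by (meson card_image_le card_mono finite_imageI le_trans)
qed

lemma multisets_of_size_2E:
  assumes "X \<in> multisets_of_size S 2"
  obtains p q where "X = {#p, q#}" "p \<in> S" "q \<in> S"
proof -
  have "size X = Suc (Suc 0)" "set_mset X \<subseteq> S"
    using assms by (auto simp: multisets_of_size_def)
  then show ?thesis
    by (elim size_mset_SucE) (auto intro: that simp: size_eq_0_iff_empty)
qed

lemma card_multisets_of_size_2:
  assumes "finite S"
  shows "2 * card (multisets_of_size S 2) = card S * (card S + 1)"
  using card_multisets_of_size[OF assms, of 2] by (simp add: choose_two)

lemma exists_image_mset_lessThan:
  assumes "size p = n"
  obtains f where "image_mset f (mset_set {..<n}) = p"
proof -
  obtain xs where xs: "mset xs = p" using ex_mset by blast
  then have "length xs = n" using assms by auto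
  then have "image_mset ((!) xs) (mset_set {..<n}) = p"
    using xs by (metis lessThan_atLeast0 map_nth mset_map mset_upt)
  then show ?thesis by (rule that)
qed

section \<open>Spanning trees of K_{a,a}\<close>

lemma Kaa_edges_bipartite: "Kaa_edges a = bipartite_edges (Inl ` {..<a}) (Inr ` {..<a})"
  unfolding Kaa_edges_def bipartite_edges_def by blast

abbreviation Kaa_side_degrees :: "nat \<Rightarrow> (nat + nat) set set \<Rightarrow> nat multiset multiset" where
  "Kaa_side_degrees a \<equiv> side_degrees (Inl ` {..<a}) (Inr ` {..<a})"

lemma Kaa_side_degrees_iso:
  assumes "spanning_tree_Kaa a T1" "spanning_tree_Kaa a T2" "graph_iso (Kaa_verts a) T1 T2"
  shows "Kaa_side_degrees a T1 = Kaa_side_degrees a T2"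
  using assms side_degrees_iso[of "Inl ` {..<a}" "Inr ` {..<a}" T1 T2]
  by (auto simp: spanning_tree_Kaa_def Kaa_verts_def Kaa_edges_bipartite is_tree_def)

lemma finite_spanning_trees_Kaa: "finite {T. spanning_tree_Kaa a T}"
proof -
  have "Kaa_edges a = (\<lambda>(i, j). {Inl i, Inr j}) ` ({..<a} \<times> {..<a})"
    unfolding Kaa_edges_def by auto
  then have "finite (Pow (Kaa_edges a))" by simp
  then show ?thesis by (rule finite_subset[rotated]) (auto simp: spanning_tree_Kaa_def)
qed

lemma card_Kaa_side_degrees_le_I_aa:
  "card (Kaa_side_degrees a ` {T. spanning_tree_Kaa a T}) \<le> I_aa a"
  unfolding I_aa_def
proof (rule card_image_le_card_quotient[OF finite_spanning_trees_Kaa])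
  have "graph_iso (Kaa_verts a) T T" for T
    unfolding graph_iso_def by (rule exI[of _ id]) simp
  then show "(T, T) \<in> {(T1, T2). spanning_tree_Kaa a T1 \<and> spanning_tree_Kaa a T2 \<and>
      graph_iso (Kaa_verts a) T1 T2}" if "T \<in> {T. spanning_tree_Kaa a T}" for T
    using that by simp
qed (use Kaa_side_degrees_iso in blast)

lemma Kaa_side_degrees_realizable:
  assumes a: "1 \<le> a"
    and p: "size p = a" "sum_mset p = 2 * a - 1" "\<forall>x\<in>#p. 0 < x"
    and q: "size q = a" "sum_mset q = 2 * a - 1" "\<forall>x\<in>#q. 0 < x"
  shows "\<exists>T. spanning_tree_Kaa a T \<and> Kaa_side_degrees a T = {#p, q#}"
proof -
  let ?L = "Inl ` {..<a} :: (nat + nat) set" and ?R = "Inr ` {..<a} :: (nat + nat) set"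
  obtain f where f: "image_mset f (mset_set {..<a}) = p" using exists_image_mset_lessThan p(1) .
  obtain g where g: "image_mset g (mset_set {..<a}) = q" using exists_image_mset_lessThan q(1) .
  define d where "d = case_sum f g"
  have "sum d ?L = sum f {..<a}" "sum d ?R = sum g {..<a}"
    by (simp_all add: sum.reindex inj_on_def d_def)
  then have "sum d ?L = sum_mset p" "sum d ?R = sum_mset q"
    using f g by (simp_all add: sum_unfold_sum_mset)
  moreover have "\<forall>x\<in>?L \<union> ?R. 0 < d x" using p(3) q(3) f g by (auto simp: d_def)
  ultimately have "bipartite_tree_degrees ?L ?R d"
    using a p(2) q(2) by (auto simp: bipartite_tree_degrees_def card_image)
  then obtain T where T: "bipartite_tree_with_degrees ?L ?R d T"
    using bipartite_tree_degrees_realizable by blast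
  then have "spanning_tree_Kaa a T"
    by (simp add: bipartite_tree_with_degrees_def spanning_tree_Kaa_def Kaa_edges_bipartite Kaa_verts_def)
  moreover have "degree_mset T ?L = p" "degree_mset T ?R = q"
    using T f g degree_mset_image[of Inl "{..<a}" T f] degree_mset_image[of Inr "{..<a}" T g]
    by (auto simp: bipartite_tree_with_degrees_def d_def)
  ultimately show ?thesis by (auto simp: side_degrees_def)
qed

theorem theorem2p4:
  fixes a :: nat
  assumes "a \<ge> 2"
  shows "real (I_aa a) \<ge> real (P_part a (2 * a - 1) * (P_part a (2 * a - 1) + 1)) / 2"
proof -
  define Parts where
    "Parts = {p :: nat multiset. size p = a \<and> sum_mset p = 2 * a - 1 \<and> (\<forall>x\<in>#p. x > 0)}"
  have "multisets_of_size Parts 2 \<subseteq> Kaa_side_degrees a ` {T. spanning_tree_Kaa a T}"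
  proof
    fix X assume "X \<in> multisets_of_size Parts 2"
    then obtain p q where X: "X = {#p, q#}" and "p \<in> Parts" "q \<in> Parts"
      by (rule multisets_of_size_2E)
    then obtain T where "spanning_tree_Kaa a T" "Kaa_side_degrees a T = {#p, q#}"
      using Kaa_side_degrees_realizable[of a p q] assms unfolding Parts_def by auto
    then show "X \<in> Kaa_side_degrees a ` {T. spanning_tree_Kaa a T}"
      using X by (intro image_eqI[of _ _ T]) simp_all
  qed
  then have "card (multisets_of_size Parts 2) \<le> card (Kaa_side_degrees a ` {T. spanning_tree_Kaa a T})"
    by (intro card_mono finite_imageI finite_spanning_trees_Kaa)
  also have "\<dots> \<le> I_aa a" by (rule card_Kaa_side_degrees_le_I_aa)
  finally have "card Parts * (card Parts + 1) \<le> 2 * I_aa a"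
    using card_multisets_of_size_2[of Parts] by (cases "finite Parts") auto
  then have "real (card Parts * (card Parts + 1)) \<le> real (2 * I_aa a)"
    by (simp only: of_nat_le_iff)
  moreover have "P_part a (2 * a - 1) = card Parts" by (simp add: P_part_def Parts_def)
  ultimately show ?thesis by simp
qed

end
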